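(* Let $f(z)=e^z$ and let $W\subset\mathbb{C}$ be open and nonempty. Then there are infinitely many integers $n\geq 0$ such that $f^n(W)\cap(-\infty,0]\neq\emptyset$.
   Context: $f^n$ denotes the $n$-th iterate of $f$ ($f^0=\mathrm{id}$). *)

theory Defs
  imports "HOL-Analysis.Analysis"
begin

end

theory Submission
  imports Defs "HOL-Complex_Analysis.Complex_Analysis"
begin

(* Suppose not.  Replacing W by a far iterate U = exp^N(W), no iterate exp^n(U) meets (-oo,0].
   The only tool is a Schwarz-Pick estimate for holomorphic maps of a disc into a horizontal strip
   of height pi: the derivative at the centre is at most 2 sin(distance to the lower edge)/radius.
   Images of a disc under exp^n are connected, and exp maps the lines Im z = k*pi onto the real
   axis, so avoidance of (-oo,0] (resp. of all of R) traps exp^n(disc) inside one strip.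

   (1) If some exp^m(U) contains a positive real t, the iterates exp^j of a disc around t stay in
       the strip |Im| < pi, while (exp^j)'(t) >= exp(t)^j grows without bound: contradiction.
   (2) Otherwise no exp^n(U) meets R.  Writing exp^n(c) = x_n + i y_n for the centre c of a disc in
       U, the strip estimate bounds prod_{j<n} exp(x_j) by a multiple of |sin y_n|.  An elementary
       study of the real recursion x' = e^x cos y, y' = e^x sin y shows that this forces |y_n| < 1
       eventually and then makes |y_n| grow geometrically: contradiction. *)

lemma cayley_norm_less_1:
  assumes "Im w > 0" and "Im w0 > 0"
  shows "norm ((w - w0) / (w - cnj w0)) < 1"
proof -
  have "(norm (w - w0))\<^sup>2 < (norm (w - cnj w0))\<^sup>2"
    using assms unfolding cmod_power2 by (simp add: power2_eq_square algebra_simps)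
  hence "norm (w - w0) < norm (w - cnj w0)" by (rule power_less_imp_less_base) simp
  thus ?thesis by (simp add: norm_divide divide_less_eq)
qed

lemma cayley_has_derivative:
  assumes dF: "(F has_field_derivative F') (at z)" and Fz: "F z = w0" and w0: "Im w0 > 0"
  shows "((\<lambda>u. (F u - w0) / (F u - cnj w0)) has_field_derivative F' / (w0 - cnj w0)) (at z)"
proof -
  have w0_ne: "w0 - cnj w0 \<noteq> 0" using w0 by (auto simp: complex_eq_iff)
  have "((\<lambda>u. (F u - w0) / (F u - cnj w0)) has_field_derivative
          (F' * (w0 - cnj w0) - (w0 - w0) * F') / (w0 - cnj w0)\<^sup>2) (at z)"
    using DERIV_divide[OF DERIV_diff[OF dF DERIV_const[of w0]] DERIV_diff[OF dF DERIV_const[of "cnj w0"]]]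
      w0_ne Fz by (simp add: power2_eq_square)
  thus ?thesis using w0_ne by (simp add: power2_eq_square)
qed

(* Schwarz lemma for maps of a disc into the upper half-plane: |f'(c)| r <= 2 Im f(c).
   Obtained by composing with the Cayley transform centred at f(c) and rescaling the disc. *)
lemma upper_halfplane_schwarz:
  fixes f :: "complex \<Rightarrow> complex"
  assumes hol: "f holomorphic_on ball c r" and r: "r > 0"
    and der: "(f has_field_derivative f') (at c)"
    and upper: "\<And>z. z \<in> ball c r \<Longrightarrow> Im (f z) > 0"
  shows "norm f' * r \<le> 2 * Im (f c)"
proof -
  define w0 where "w0 = f c"
  define F where "F u = f (c + of_real r * u)" for u
  define h where "h u = (F u - w0) / (F u - cnj w0)" for u
  have F_upper: "Im (F u) > 0" if "norm u < 1" for u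
    using upper[of "c + of_real r * u"] that r by (simp add: F_def dist_norm norm_mult)
  have w0: "Im w0 > 0" using F_upper[of 0] by (simp add: F_def w0_def)
  have F0: "F 0 = w0" by (simp add: F_def w0_def)
  have "F holomorphic_on ball 0 1"
    unfolding F_def
    by (rule holomorphic_on_compose_gen[where g = f and t = "ball c r", unfolded o_def])
       (use hol r in \<open>auto intro!: holomorphic_intros simp: dist_norm norm_mult\<close>)
  moreover have "F u - cnj w0 \<noteq> 0" if "norm u < 1" for u
    using F_upper[OF that] w0 by (auto simp: complex_eq_iff)
  ultimately have h_holomorphic: "h holomorphic_on ball 0 1"
    unfolding h_def by (intro holomorphic_intros) auto
  have h_less_1: "norm (h u) < 1" if "norm u < 1" for u
    unfolding h_def using cayley_norm_less_1[OF F_upper[OF that] w0] .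
  have "((\<lambda>u. c + of_real r * u) has_field_derivative of_real r) (at 0)"
    by (auto intro!: derivative_eq_intros)
  from DERIV_chain2[OF _ this, of f f'] der
  have "(F has_field_derivative f' * of_real r) (at 0)" by (simp add: F_def[abs_def])
  hence "(h has_field_derivative f' * of_real r / (w0 - cnj w0)) (at 0)"
    unfolding h_def[abs_def] using F0 w0 by (rule cayley_has_derivative)
  moreover have "h 0 = 0" by (simp add: h_def F0)
  ultimately have "norm (f' * of_real r / (w0 - cnj w0)) \<le> 1"
    using Schwarz_Lemma(2)[OF h_holomorphic _ h_less_1, of 0] by (simp add: DERIV_imp_deriv)
  moreover have "norm (w0 - cnj w0) = 2 * Im w0"
    using w0 by (simp add: complex_diff_cnj norm_mult)
  ultimately show ?thesis
    using w0 r by (simp add: norm_divide norm_mult divide_le_eq w0_def split: if_splits)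
qed

(* The same estimate for maps into the strip a < Im < a + pi, which exp(z - i a) carries
   into the upper half-plane. *)
lemma strip_schwarz:
  fixes g :: "complex \<Rightarrow> complex"
  assumes hol: "g holomorphic_on ball c r" and r: "r > 0"
    and der: "(g has_field_derivative g') (at c)"
    and strip: "\<And>z. z \<in> ball c r \<Longrightarrow> a < Im (g z) \<and> Im (g z) < a + pi"
  shows "norm g' * r \<le> 2 * sin (Im (g c) - a)"
proof -
  define f where "f z = exp (g z - \<i> * of_real a)" for z
  have Im_f: "Im (f z) = exp (Re (g z)) * sin (Im (g z) - a)" for z
    by (simp add: f_def Im_exp)
  have "(f has_field_derivative f c * g') (at c)"
    unfolding f_def[abs_def] using der by (auto intro!: derivative_eq_intros)
  moreover have "f holomorphic_on ball c r"
    unfolding f_def using hol by (intro holomorphic_intros)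
  moreover have "Im (f z) > 0" if "z \<in> ball c r" for z
    using strip[OF that] by (simp add: Im_f sin_gt_zero)
  ultimately have "norm (f c * g') * r \<le> 2 * Im (f c)"
    using upper_halfplane_schwarz r by blast
  hence "exp (Re (g c)) * (norm g' * r) \<le> exp (Re (g c)) * (2 * sin (Im (g c) - a))"
    unfolding norm_mult Im_f by (simp add: f_def algebra_simps)
  thus ?thesis by simp
qed

lemma connected_in_strip:
  fixes S :: "complex set"
  assumes "connected S" and "p \<in> S" and "a < Im p" and "Im p < b"
    and avoid: "\<And>v. v \<in> S \<Longrightarrow> Im v \<noteq> a \<and> Im v \<noteq> b"
    and "w \<in> S"
  shows "a < Im w \<and> Im w < b"
proof (rule ccontr)
  have ivt: "\<exists>v\<in>S. Im v = t" if "x \<in> S" "y \<in> S" "Im x \<le> t" "t \<le> Im y" for x y t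
    using connected_ivt_component[OF \<open>connected S\<close> that(1,2), of \<i> t] that(3,4) by simp
  assume "\<not> (a < Im w \<and> Im w < b)"
  hence "Im w \<le> a \<or> b \<le> Im w" by linarith
  thus False
    using ivt[OF \<open>w \<in> S\<close> \<open>p \<in> S\<close>, of a] ivt[OF \<open>p \<in> S\<close> \<open>w \<in> S\<close>, of b] assms(3,4) avoid
    by fastforce
qed

lemma iterate_exp_deriv:
  "(((exp :: complex \<Rightarrow> complex) ^^ n) has_field_derivative (\<Prod>j<n. exp ((exp ^^ j) z))) (at z)"
proof (induction n)
  case 0
  show ?case by (simp add: id_def)
next
  case (Suc n)
  have "((\<lambda>z. exp ((exp ^^ n) z)) has_field_derivative exp ((exp ^^ n) z) * (\<Prod>j<n. exp ((exp ^^ j) z))) (at z)"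
    by (rule DERIV_chain2[OF DERIV_exp Suc.IH])
  thus ?case by (simp add: mult.commute)
qed

lemma iterate_exp_holomorphic: "((exp :: complex \<Rightarrow> complex) ^^ n) holomorphic_on S"
  using iterate_exp_deriv by (auto simp: holomorphic_on_def field_differentiable_def
      intro: has_field_derivative_at_within)

lemma open_exp_image:
  assumes "open (U :: complex set)"
  shows "open (exp ` U)"
proof (rule open_mapping_thm[OF holomorphic_on_exp open_UNIV connected_UNIV assms subset_UNIV])
  show "\<not> exp constant_on (UNIV :: complex set)"
  proof
    assume "exp constant_on (UNIV :: complex set)"
    hence "exp (1 :: complex) = exp 0" unfolding constant_on_def by (metis UNIV_I)
    hence "exp (1 :: real) = 1" by (metis exp_of_real exp_zero of_real_eq_1_iff of_real_1)
    thus False by simp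
  qed
qed

lemma open_iterate_exp_image:
  assumes "open (U :: complex set)"
  shows "open ((exp ^^ n) ` U)"
proof (induction n)
  case 0
  show ?case using assms by simp
next
  case (Suc n)
  have "(exp ^^ Suc n) ` U = exp ` ((exp ^^ n) ` U)" by (simp add: image_comp)
  thus ?case using open_exp_image[OF Suc.IH] by simp
qed

lemma iterate_exp_of_real:
  "((exp :: complex \<Rightarrow> complex) ^^ n) (of_real t) = of_real (((exp :: real \<Rightarrow> real) ^^ n) t)"
  by (induction n) (simp_all add: exp_of_real)

lemma iterate_exp_real_ge: "t \<le> ((exp :: real \<Rightarrow> real) ^^ n) t"
proof (induction n)
  case 0
  show ?case by simp
next
  case (Suc n)
  thus ?case using exp_gt_self[of "((exp :: real \<Rightarrow> real) ^^ n) t"] by simp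
qed

lemma exp_of_horizontal_line_pi:
  assumes "\<bar>Im v\<bar> = pi"
  shows "exp v \<in> \<real> \<and> Re (exp v) \<le> 0"
proof -
  have "Im v = pi \<or> Im v = - pi" using assms by linarith
  hence "sin (Im v) = 0" "cos (Im v) = -1" by auto
  thus ?thesis by (simp add: complex_is_Real_iff Im_exp Re_exp)
qed

lemma orbit_of_real_ball_in_strip:
  fixes U :: "complex set"
  assumes avoid: "\<And>n. (exp ^^ n) ` U \<inter> {z. z \<in> \<real> \<and> Re z \<le> 0} = {}"
    and ball: "ball (complex_of_real t) e \<subseteq> (exp ^^ m) ` U" and w: "w \<in> ball (complex_of_real t) e"
  shows "- pi < Im ((exp ^^ j) w) \<and> Im ((exp ^^ j) w) < pi"
proof (rule connected_in_strip)
  show "connected ((exp ^^ j) ` ball (complex_of_real t) e)"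
    by (intro connected_continuous_image holomorphic_on_imp_continuous_on
        iterate_exp_holomorphic connected_ball)
  have "0 < e" using w le_less_trans[OF zero_le_dist] by auto
  thus "(exp ^^ j) (complex_of_real t) \<in> (exp ^^ j) ` ball (complex_of_real t) e" by simp
  show "(exp ^^ j) w \<in> (exp ^^ j) ` ball (complex_of_real t) e" using w by simp
  show "- pi < Im ((exp ^^ j) (complex_of_real t))" "Im ((exp ^^ j) (complex_of_real t)) < pi"
    by (simp_all add: iterate_exp_of_real)
  fix v assume "v \<in> (exp ^^ j) ` ball (complex_of_real t) e"
  then obtain u where "u \<in> U" "v = (exp ^^ (j + m)) u" using ball by (auto simp: funpow_add)
  hence "exp v \<in> (exp ^^ Suc (j + m)) ` U" by auto
  thus "Im v \<noteq> - pi \<and> Im v \<noteq> pi"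
    using avoid[of "Suc (j + m)"] exp_of_horizontal_line_pi[of v] by auto
qed

lemma iterate_exp_deriv_at_real:
  "exp t ^ j \<le> norm (\<Prod>i<j. exp (((exp :: complex \<Rightarrow> complex) ^^ i) (complex_of_real t)))"
proof -
  have "exp t ^ j \<le> (\<Prod>i<j. exp (((exp :: real \<Rightarrow> real) ^^ i) t))"
    using prod_mono[of "{..<j}" "\<lambda>_. exp t"] iterate_exp_real_ge by simp
  thus ?thesis by (simp add: prod_norm[symmetric] iterate_exp_of_real)
qed

(* Case (1): confinement to a strip of bounded height and unbounded derivative growth are
   incompatible, so no image of U contains a positive real. *)
lemma no_positive_real_in_orbit:
  fixes U :: "complex set"
  assumes U: "open U"
    and avoid: "\<And>n. (exp ^^ n) ` U \<inter> {z. z \<in> \<real> \<and> Re z \<le> 0} = {}"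
    and t: "t > 0"
  shows "of_real t \<notin> (exp ^^ m) ` U"
proof
  assume "of_real t \<in> (exp ^^ m) ` U"
  then obtain e where e: "e > 0" "ball (complex_of_real t) e \<subseteq> (exp ^^ m) ` U"
    using open_iterate_exp_image[OF U] openE by meson
  have "norm (\<Prod>i<j. exp ((exp ^^ i) (complex_of_real t))) \<le> 4 / e" for j
  proof -
    let ?D = "\<Prod>i<j. exp ((exp ^^ i) (complex_of_real t))"
    have "norm (?D / 2) * e \<le> 2 * sin (Im ((exp ^^ j) (complex_of_real t) / 2) - - pi / 2)"
    proof (rule strip_schwarz[where g = "\<lambda>w. (exp ^^ j) w / 2", OF _ e(1)])
      show "(\<lambda>w. (exp ^^ j) w / 2) holomorphic_on ball (complex_of_real t) e"
        using iterate_exp_holomorphic by (intro holomorphic_intros) auto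
      show "((\<lambda>w. (exp ^^ j) w / 2) has_field_derivative ?D / 2) (at (complex_of_real t))"
        by (rule DERIV_cdivide[OF iterate_exp_deriv])
      show "- pi / 2 < Im ((exp ^^ j) w / 2) \<and> Im ((exp ^^ j) w / 2) < - pi / 2 + pi"
        if "w \<in> ball (complex_of_real t) e" for w
        using orbit_of_real_ball_in_strip[OF avoid e(2) that, of j] by simp
    qed
    also have "\<dots> \<le> 2" by simp
    finally show ?thesis using e(1) by (simp add: norm_divide field_simps)
  qed
  moreover obtain j where "4 / e < exp t ^ j" using real_arch_pow[of "exp t" "4 / e"] t by auto
  ultimately show False using iterate_exp_deriv_at_real[of t j] by (meson not_le order.trans)
qed

(* Case (2), Schwarz step: if no image of U meets R, then exp^n maps a disc B(c,r) in U into a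
   strip between consecutive lines Im = k pi, whence |(exp^n)'(c)| r <= 2 |sin Im exp^n(c)|. *)
lemma orbit_derivative_bound:
  fixes U :: "complex set"
  assumes ball: "ball c r \<subseteq> U" and r: "r > 0"
    and avoid: "\<And>n. (exp ^^ n) ` U \<inter> \<real> = {}"
  shows "(\<Prod>j<n. exp (Re ((exp ^^ j) c))) * r \<le> 2 * \<bar>sin (Im ((exp ^^ n) c))\<bar>"
proof -
  define y where "y = Im ((exp ^^ n) c)"
  define k where "k = \<lfloor>y / pi\<rfloor>"
  define a where "a = pi * of_int k"
  have line_avoided: "Im v \<noteq> pi * of_int l" if "v \<in> (exp ^^ n) ` ball c r" for v l
  proof
    assume "Im v = pi * of_int l"
    hence "exp v \<in> \<real>" by (simp add: complex_is_Real_iff Im_exp)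
    moreover have "exp v \<in> (exp ^^ Suc n) ` U" using that ball by auto
    ultimately show False using avoid[of "Suc n"] by blast
  qed
  have "of_int k \<le> y / pi" "y / pi < of_int k + 1" unfolding k_def by linarith+
  hence "a \<le> y" "y < a + pi" unfolding a_def by (simp_all add: field_simps)
  moreover have "y \<noteq> a"
    using line_avoided[of "(exp ^^ n) c" k] r by (simp add: y_def a_def)
  ultimately have y_strip: "a < y" "y < a + pi" by simp_all
  have in_strip: "a < Im ((exp ^^ n) w) \<and> Im ((exp ^^ n) w) < a + pi" if "w \<in> ball c r" for w
  proof (rule connected_in_strip)
    show "connected ((exp ^^ n) ` ball c r)"
      by (intro connected_continuous_image holomorphic_on_imp_continuous_on
          iterate_exp_holomorphic connected_ball)
    show "(exp ^^ n) c \<in> (exp ^^ n) ` ball c r" "(exp ^^ n) w \<in> (exp ^^ n) ` ball c r"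
      using r that by simp_all
    show "a < Im ((exp ^^ n) c)" "Im ((exp ^^ n) c) < a + pi" using y_strip by (simp_all add: y_def)
    fix v assume "v \<in> (exp ^^ n) ` ball c r"
    thus "Im v \<noteq> a \<and> Im v \<noteq> a + pi"
      using line_avoided[of v k] line_avoided[of v "k + 1"] by (auto simp: a_def algebra_simps)
  qed
  have "norm (\<Prod>j<n. exp ((exp ^^ j) c)) * r \<le> 2 * sin (y - a)"
    unfolding y_def
    by (rule strip_schwarz[OF iterate_exp_holomorphic r iterate_exp_deriv in_strip])
  also have "sin (y - a) \<le> \<bar>sin y\<bar>"
    by (auto simp: a_def sin_diff)
  finally show ?thesis by (simp add: y_def prod_norm[symmetric])
qed

lemma sin_taylor_5: "\<bar>sin (x :: real) - (x - x ^ 3 / 6)\<bar> \<le> \<bar>x\<bar> ^ 5 / 120"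
proof -
  have "sin_coeff 0 = 0" "sin_coeff 1 = 1" "sin_coeff 2 = 0" "sin_coeff 3 = -1/6" "sin_coeff 4 = 0"
    by (simp_all add: sin_coeff_def fact_numeral)
  hence "(\<Sum>m<5. sin_coeff m * x ^ m) = x - x ^ 3 / 6"
    by (simp add: eval_nat_numeral)
  moreover have inv: "inverse (fact 5) = (1 / 120 :: real)"
    by (simp add: fact_numeral)
  ultimately show ?thesis
    using Maclaurin_sin_bound[of x 5] by (simp only: inv)
qed

lemma abs_sin_abs: "\<bar>sin \<bar>y :: real\<bar>\<bar> = \<bar>sin y\<bar>"
  by (cases "y \<ge> 0") auto

lemma sin_upper_bound:
  fixes y :: real
  assumes "1 \<le> \<bar>y\<bar>"
  shows "\<bar>sin y\<bar> \<le> 17 / 20 * \<bar>y\<bar>"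
proof (cases "\<bar>y\<bar> \<le> 2")
  case True
  define t where "t = \<bar>y\<bar>"
  define s where "s = t\<^sup>2"
  have t: "1 \<le> t" "t \<le> 2" using assms True by (simp_all add: t_def)
  hence s: "1 \<le> s" "s \<le> 4" unfolding s_def by (simp_all add: power_mono[of 1 t 2, simplified]
        power_mono[of t 2 2, simplified])
  have "(s - 1) * (s - 4) \<le> 0" using s by (simp add: mult_nonneg_nonpos)
  hence "1 - s / 6 + s\<^sup>2 / 120 \<le> 17 / 20" using s by (simp add: power2_eq_square algebra_simps)
  hence "t * (1 - s / 6 + s\<^sup>2 / 120) \<le> t * (17 / 20)" using t by (intro mult_left_mono) auto
  moreover have "t - t ^ 3 / 6 + t ^ 5 / 120 = t * (1 - s / 6 + s\<^sup>2 / 120)"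
    by (simp add: s_def algebra_simps eval_nat_numeral)
  moreover have "sin t \<le> t - t ^ 3 / 6 + t ^ 5 / 120" using sin_taylor_5[of t] t by arith
  moreover have "0 \<le> sin t" using t pi_gt3 by (intro sin_ge_zero) auto
  ultimately have "\<bar>sin t\<bar> \<le> 17 / 20 * t" by simp
  thus ?thesis by (simp add: t_def abs_sin_abs)
next
  case False
  thus ?thesis using abs_sin_le_one[of y] by linarith
qed

lemma sin_lower_bound:
  fixes y :: real
  assumes "\<bar>y\<bar> < 1"
  shows "4 / 5 * \<bar>y\<bar> \<le> \<bar>sin y\<bar>"
proof -
  define t where "t = \<bar>y\<bar>"
  have t: "0 \<le> t" "t < 1" using assms by (simp_all add: t_def)
  have "t ^ 3 \<le> t" "t ^ 5 \<le> t"
    using power_decreasing[of 1 3 t] power_decreasing[of 1 5 t] t by simp_all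
  hence "4 / 5 * t \<le> \<bar>sin t\<bar>" using sin_taylor_5[of t] t by arith
  thus ?thesis by (simp add: t_def abs_sin_abs)
qed

lemma cos_lower_bound:
  fixes y :: real
  assumes "\<bar>y\<bar> < 1"
  shows "1 / 2 \<le> cos y"
proof -
  have "\<bar>sin (y / 2)\<bar> \<le> 1 / 2" using abs_sin_x_le_abs_x[of "y / 2"] assms by simp
  hence "(sin (y / 2))\<^sup>2 \<le> (1 / 2)\<^sup>2" by (metis abs_ge_zero power2_abs power_mono)
  moreover have "cos y = 1 - 2 * (sin (y / 2))\<^sup>2" using cos_double_sin[of "y / 2"] by simp
  ultimately show ?thesis by (simp add: power_divide)
qed

lemma finite_large_factors:
  fixes f :: "nat \<Rightarrow> real"
  assumes ge_1: "\<And>j. 1 \<le> f j" and q: "1 < q" and bounded: "\<And>n. (\<Prod>j<n. f j) \<le> B"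
  shows "finite {j. q \<le> f j}"
proof (rule ccontr)
  assume inf: "infinite {j. q \<le> f j}"
  have "q ^ m \<le> B" for m
  proof -
    obtain A where A: "finite A" "card A = m" "A \<subseteq> {j. q \<le> f j}"
      using infinite_arbitrarily_large[OF inf] by blast
    then obtain n where n: "A \<subseteq> {..<n}" using finite_nat_iff_bounded by blast
    have "q ^ m = (\<Prod>j\<in>A. q)" using A(2) by simp
    also have "\<dots> \<le> (\<Prod>j\<in>A. f j)" using A(3) q by (intro prod_mono) auto
    also have "\<dots> \<le> (\<Prod>j<n. f j)"
      using n ge_1 order_trans[OF zero_le_one ge_1] by (intro prod_mono2) auto
    also have "\<dots> \<le> B" by (rule bounded)
    finally show ?thesis .
  qed
  moreover obtain m where "B < q ^ m" using real_arch_pow[OF q] by blast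
  ultimately show False by (meson not_le)
qed

(* Case (2), first half: the ratios |y_j| / |sin y_j| have bounded products, because the
   product of exp(x_j) telescopes against them; as the ratio is >= 20/17 whenever |y_j| >= 1,
   only finitely many |y_j| are >= 1. *)
lemma orbit_imaginary_parts_eventually_small:
  fixes x y :: "nat \<Rightarrow> real"
  assumes y_Suc: "\<And>n. y (Suc n) = exp (x n) * sin (y n)"
    and y_nonzero: "\<And>n. y n \<noteq> 0"
    and bound: "\<And>n. (\<Prod>j<n. exp (x j)) \<le> C * \<bar>sin (y n)\<bar>"
  shows "\<exists>J. \<forall>j\<ge>J. \<bar>y j\<bar> < 1"
proof -
  have sin_nonzero: "sin (y n) \<noteq> 0" for n
    using y_nonzero[of "Suc n"] by (simp add: y_Suc)
  define Q where "Q j = \<bar>y j\<bar> / \<bar>sin (y j)\<bar>" for j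
  have Q_ge_1: "1 \<le> Q j" for j
    using abs_sin_x_le_abs_x[of "y j"] sin_nonzero[of j] by (simp add: Q_def)
  have telescope: "(\<Prod>j<n. exp (x j)) * \<bar>sin (y 0)\<bar> = \<bar>sin (y n)\<bar> * (\<Prod>j<n. Q (Suc j))" for n
  proof (induction n)
    case 0
    show ?case by simp
  next
    case (Suc n)
    have "(\<Prod>j<Suc n. exp (x j)) * \<bar>sin (y 0)\<bar> = \<bar>sin (y n)\<bar> * exp (x n) * (\<Prod>j<n. Q (Suc j))"
      using Suc.IH by (simp add: algebra_simps)
    also have "\<bar>sin (y n)\<bar> * exp (x n) = \<bar>sin (y (Suc n))\<bar> * Q (Suc n)"
      using sin_nonzero[of "Suc n"] by (simp add: Q_def y_Suc abs_mult)
    finally show ?case by (simp add: algebra_simps)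
  qed
  have "(\<Prod>j<n. Q (Suc j)) \<le> C * \<bar>sin (y 0)\<bar>" for n
  proof -
    have "\<bar>sin (y n)\<bar> * (\<Prod>j<n. Q (Suc j)) = (\<Prod>j<n. exp (x j)) * \<bar>sin (y 0)\<bar>"
      by (simp add: telescope)
    also have "\<dots> \<le> C * \<bar>sin (y n)\<bar> * \<bar>sin (y 0)\<bar>"
      by (rule mult_right_mono[OF bound]) simp
    finally show ?thesis using sin_nonzero[of n] by (simp add: algebra_simps)
  qed
  hence "finite {j. 20 / 17 \<le> Q (Suc j)}"
    by (intro finite_large_factors[of "\<lambda>j. Q (Suc j)"] Q_ge_1) auto
  moreover have "{j. 1 \<le> \<bar>y (Suc j)\<bar>} \<subseteq> {j. 20 / 17 \<le> Q (Suc j)}"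
    using sin_upper_bound sin_nonzero by (auto simp: Q_def field_simps)
  ultimately obtain K where "{j. 1 \<le> \<bar>y (Suc j)\<bar>} \<subseteq> {..<K}"
    using finite_subset finite_nat_iff_bounded by meson
  hence "\<bar>y j\<bar> < 1" if "Suc K \<le> j" for j
    using that by (cases j) (auto simp: subset_eq not_le)
  thus ?thesis by blast
qed

(* Case (2), second half: once |y_j| < 1 for good, cos y_j >= 1/2 pushes x_j above 1/2, and then
   |y_(j+1)| = e^(x_j) |sin y_j| >= 6/5 |y_j| contradicts boundedness. *)
lemma orbit_cannot_stay_near_real_axis:
  fixes x y :: "nat \<Rightarrow> real"
  assumes x_Suc: "\<And>n. x (Suc n) = exp (x n) * cos (y n)"
    and y_Suc: "\<And>n. y (Suc n) = exp (x n) * sin (y n)"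
    and y_nonzero: "\<And>n. y n \<noteq> 0"
    and small: "\<And>j. J \<le> j \<Longrightarrow> \<bar>y j\<bar> < 1"
  shows False
proof -
  have x_pos: "0 < x (Suc j)" if "J \<le> j" for j
    using cos_lower_bound[OF small[OF that]] by (simp add: x_Suc)
  have x_half: "1 / 2 \<le> x (Suc (Suc j))" if "J \<le> j" for j
  proof -
    have "1 \<le> exp (x (Suc j))" using x_pos[OF that] by simp
    moreover have "1 / 2 \<le> cos (y (Suc j))" using that by (intro cos_lower_bound small) simp
    ultimately show ?thesis using mult_mono[of 1 "exp (x (Suc j))" "1 / 2"] by (simp add: x_Suc)
  qed
  have growth: "6 / 5 * \<bar>y j\<bar> \<le> \<bar>y (Suc j)\<bar>" if "J + 2 \<le> j" for j
  proof -
    have "3 / 2 \<le> exp (1 / 2 :: real)" using exp_ge_add_one_self[of "1 / 2 :: real"] by simp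
    also have "\<dots> \<le> exp (x j)" using x_half[of "j - 2"] that by (simp add: numeral_2_eq_2 Suc_diff_Suc)
    finally have "3 / 2 * (4 / 5 * \<bar>y j\<bar>) \<le> exp (x j) * \<bar>sin (y j)\<bar>"
      using sin_lower_bound[OF small[of j]] that by (intro mult_mono) auto
    thus ?thesis by (simp add: y_Suc abs_mult)
  qed
  have geometric: "(6 / 5) ^ m * \<bar>y (J + 2)\<bar> \<le> \<bar>y (J + 2 + m)\<bar>" for m
  proof (induction m)
    case 0
    show ?case by simp
  next
    case (Suc m)
    have "(6 / 5) ^ Suc m * \<bar>y (J + 2)\<bar> \<le> 6 / 5 * \<bar>y (J + 2 + m)\<bar>"
      using mult_left_mono[OF Suc.IH, of "6 / 5"] by (simp add: mult.assoc)
    also have "\<dots> \<le> \<bar>y (J + 2 + Suc m)\<bar>" using growth[of "J + 2 + m"] by simp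
    finally show ?case .
  qed
  obtain m where "1 / \<bar>y (J + 2)\<bar> < (6 / 5) ^ m" using real_arch_pow[of "6 / 5"] by auto
  hence "1 < (6 / 5) ^ m * \<bar>y (J + 2)\<bar>" using y_nonzero by (simp add: field_simps)
  with geometric[of m] small[of "J + 2 + m"] show False by simp
qed

lemma orbit_meets_real_axis:
  fixes U :: "complex set"
  assumes "open U" and "U \<noteq> {}"
  shows "\<exists>n. (exp ^^ n) ` U \<inter> \<real> \<noteq> {}"
proof (rule ccontr)
  assume "\<not> ?thesis"
  hence avoid: "\<And>n. (exp ^^ n) ` U \<inter> \<real> = {}" by blast
  obtain c r where r: "r > 0" and ball: "ball c r \<subseteq> U"
    using assms openE by (metis ex_in_conv)
  define x where "x n = Re ((exp ^^ n) c)" for n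
  define y where "y n = Im ((exp ^^ n) c)" for n
  have x_Suc: "x (Suc n) = exp (x n) * cos (y n)" for n by (simp add: x_def y_def Re_exp)
  have y_Suc: "y (Suc n) = exp (x n) * sin (y n)" for n by (simp add: x_def y_def Im_exp)
  have y_nonzero: "y n \<noteq> 0" for n
  proof
    assume "y n = 0"
    hence "(exp ^^ n) c \<in> \<real>" by (simp add: y_def complex_is_Real_iff)
    moreover have "c \<in> U" using ball r by auto
    hence "(exp ^^ n) c \<in> (exp ^^ n) ` U" by blast
    ultimately show False using avoid[of n] by blast
  qed
  have "(\<Prod>j<n. exp (x j)) \<le> 2 / r * \<bar>sin (y n)\<bar>" for n
    using orbit_derivative_bound[OF ball r avoid, of n] r by (simp add: x_def y_def field_simps)
  then obtain J where "\<forall>j\<ge>J. \<bar>y j\<bar> < 1"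
    using orbit_imaginary_parts_eventually_small[of y x, OF y_Suc y_nonzero] by blast
  thus False using orbit_cannot_stay_near_real_axis[of x y, OF x_Suc y_Suc y_nonzero] by blast
qed

(* Main theorem: far iterates of W would avoid (-oo,0]; some of them meets R, and a point there
   can be neither nonpositive nor positive. *)
theorem mainTheorem5:
  fixes W :: "complex set"
  assumes "open W" and "W \<noteq> {}"
  shows "infinite {n :: nat. ((exp :: complex \<Rightarrow> complex) ^^ n) ` W \<inter> {z. z \<in> \<real> \<and> Re z \<le> 0} \<noteq> {}}"
    (is "infinite ?hits")
proof
  assume "finite ?hits"
  then obtain N where N: "?hits \<subseteq> {..<N}" using finite_nat_iff_bounded by blast
  define U where "U = (exp ^^ N) ` W"
  have U: "open U" "U \<noteq> {}"
    using open_iterate_exp_image[OF assms(1)] assms(2) by (simp_all add: U_def)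
  have avoid: "(exp ^^ n) ` U \<inter> {z. z \<in> \<real> \<and> Re z \<le> 0} = {}" for n
  proof -
    have "n + N \<notin> ?hits" using N by auto
    thus ?thesis by (simp add: U_def funpow_add image_comp)
  qed
  obtain n v where v: "v \<in> (exp ^^ n) ` U" "v \<in> \<real>"
    using orbit_meets_real_axis[OF U] by blast
  show False
  proof (cases "Re v \<le> 0")
    case True
    thus False using avoid[of n] v by blast
  next
    case False
    have "v = of_real (Re v)" using v(2) by (simp add: complex_is_Real_iff complex_eq_iff)
    thus False using no_positive_real_in_orbit[OF U(1) avoid, of "Re v" n] v(1) False by simp
  qed
qed

end
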